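(* Let $(G,\circ)$ be a commutative group, $K$ a field, $t\in G$, $f:G\times G\to K$, and let $A=A_G(f,t)$. For $m\in\mathbb N$, one has $A^{[m]}=0$ if and only if $$\prod_{k=0}^{m-1}\ \prod_{s=0}^{2^{m-k-1}-1} f\Big(t^{2^k-1}\circ\prod_{q=1}^{2^k} a_{2^{k+1}s+q},\ \ t^{2^k-1}\circ\prod_{l=1}^{2^k} a_{2^{k+1}s+2^k+l}\Big)=0$$ for all $a_1,\dots,a_{2^m}\in G$ (products inside $f$ taken with respect to $\circ$). In particular, $A$ is solvable if and only if such an $m$ exists, and its index of solvability is the least such $m$.
   Context: The algebra $A_G(f,t)$ is the $K$-vector space with basis $\{e_a : a\in G\}$ and bilinear multiplication $e_a e_b = f(a,b)\, e_{a\circ b\circ t}$. The derived sequence is $A^{[0]}=A$, $A^{[k+1]}=A^{[k]}A^{[k]}$ (span of products); $A$ is solvable if $A^{[m]}=0$ for some $m$, and the least such $m$ is the index of solvability. *)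

theory Defs
  imports "HOL.Modules" "HOL-Algebra.Group" "HOL-Algebra.FiniteProduct" "HOL-Library.Function_Algebras"
begin

text \<open>The algebra A_G(f,t): elements are finitely supported functions from carrier G to the
field 'k (coordinates w.r.t. the basis e_a, a in G), with pointwise K-vector space structure.\<close>

definition supp_fn :: "('a \<Rightarrow> 'k::zero) \<Rightarrow> 'a set" where
  "supp_fn x = {a. x a \<noteq> 0}"

definition alg_carrier :: "('a, 'm) monoid_scheme \<Rightarrow> ('a \<Rightarrow> 'k::field) set" where
  "alg_carrier G = {x. finite (supp_fn x) \<and> supp_fn x \<subseteq> carrier G}"

text \<open>Bilinear extension of e_a e_b = f(a,b) e_(a o b o t).\<close>
definition alg_mult :: "('a, 'm) monoid_scheme \<Rightarrow> ('a \<Rightarrow> 'a \<Rightarrow> 'k::field) \<Rightarrow> 'a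
    \<Rightarrow> ('a \<Rightarrow> 'k) \<Rightarrow> ('a \<Rightarrow> 'k) \<Rightarrow> ('a \<Rightarrow> 'k)" where
  "alg_mult G f t x y = (\<lambda>c. \<Sum>a\<in>supp_fn x. \<Sum>b\<in>supp_fn y.
      if a \<otimes>\<^bsub>G\<^esub> b \<otimes>\<^bsub>G\<^esub> t = c then f a b * x a * y b else 0)"

definition fscale :: "'k::field \<Rightarrow> ('a \<Rightarrow> 'k) \<Rightarrow> ('a \<Rightarrow> 'k)" where
  "fscale c x = (\<lambda>a. c * x a)"

fun derived :: "('a, 'm) monoid_scheme \<Rightarrow> ('a \<Rightarrow> 'a \<Rightarrow> 'k::field) \<Rightarrow> 'a \<Rightarrow> nat
    \<Rightarrow> ('a \<Rightarrow> 'k) set" where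
  "derived G f t 0 = alg_carrier G"
| "derived G f t (Suc k) = module.span fscale
      {alg_mult G f t x y | x y. x \<in> derived G f t k \<and> y \<in> derived G f t k}"

definition alg_solvable :: "('a, 'm) monoid_scheme \<Rightarrow> ('a \<Rightarrow> 'a \<Rightarrow> 'k::field) \<Rightarrow> 'a \<Rightarrow> bool" where
  "alg_solvable G f t \<longleftrightarrow> (\<exists>m. derived G f t m = {0})"

definition solv_index :: "('a, 'm) monoid_scheme \<Rightarrow> ('a \<Rightarrow> 'a \<Rightarrow> 'k::field) \<Rightarrow> 'a \<Rightarrow> nat" where
  "solv_index G f t = (LEAST m. derived G f t m = {0})"

definition prod_cond :: "('a, 'm) monoid_scheme \<Rightarrow> ('a \<Rightarrow> 'a \<Rightarrow> 'k::field) \<Rightarrow> 'a \<Rightarrow> nat \<Rightarrow> bool" where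
  "prod_cond G f t m \<longleftrightarrow>
    (\<forall>a :: nat \<Rightarrow> 'a. (\<forall>i\<in>{1..2^m}. a i \<in> carrier G) \<longrightarrow>
      (\<Prod>k<m. \<Prod>s<2^(m-k-1).
         f (t [^]\<^bsub>G\<^esub> ((2::nat)^k - 1) \<otimes>\<^bsub>G\<^esub> finprod G (\<lambda>q. a (2^(k+1)*s + q)) {1..2^k})
           (t [^]\<^bsub>G\<^esub> ((2::nat)^k - 1) \<otimes>\<^bsub>G\<^esub> finprod G (\<lambda>l. a (2^(k+1)*s + 2^k + l)) {1..2^k}))
      = 0)"

end

theory Submission
  imports Defs
begin

(* Write e_g for the basis vector of g in G.  For a sequence a_1, ..., a_(2^k)
   of group elements let w_k(a) = t^(2^k - 1) a_1 ... a_(2^k) and let c_k(a) be the double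
   product of values of f occurring in the statement (with m = k).  Basis vectors multiply
   as e_g e_h = f(g,h) e_(g h t), and unfolding this shows that the level-k monomials
   c_k(a) e_(w_k(a)) are exactly the products of two level-(k-1) monomials (the sequence
   a being the concatenation of the two shorter ones), the level-0 monomials being the
   basis vectors.  As the multiplication is bilinear, the products of vectors from span S
   span the same space as the products of vectors from S; by induction A^[k] is therefore
   the span of the level-k monomials.  A span is zero iff all spanning vectors are zero,
   and c e_w = 0 iff c = 0, so A^[m] = 0 iff c_m vanishes identically, which is the product
   condition. *)

context module
begin

lemma span_eq_zero_iff: "span S = {0} \<longleftrightarrow> S \<subseteq> {0}"
proof
  assume "span S = {0}"
  then show "S \<subseteq> {0}" using span_superset by blast
next
  assume "S \<subseteq> {0}"
  then have "span S \<subseteq> {0}" by (rule span_minimal) simp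
  then show "span S = {0}" using span_zero by blast
qed

text \<open>This is what lets the derived
  sequence be computed on spanning sets.\<close>
lemma span_products_of_span:
  fixes p :: "'b \<Rightarrow> 'b \<Rightarrow> 'b"
  assumes V: "subspace V" and S: "S \<subseteq> V"
    and add_left: "\<And>x y z. x \<in> V \<Longrightarrow> y \<in> V \<Longrightarrow> z \<in> V \<Longrightarrow> p (x + y) z = p x z + p y z"
    and add_right: "\<And>x y z. x \<in> V \<Longrightarrow> y \<in> V \<Longrightarrow> z \<in> V \<Longrightarrow> p z (x + y) = p z x + p z y"
    and scale_left: "\<And>c x z. x \<in> V \<Longrightarrow> z \<in> V \<Longrightarrow> p (c *s x) z = c *s p x z"
    and scale_right: "\<And>c x z. x \<in> V \<Longrightarrow> z \<in> V \<Longrightarrow> p z (c *s x) = c *s p z x"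
  shows "span {p x y | x y. x \<in> span S \<and> y \<in> span S} = span {p x y | x y. x \<in> S \<and> y \<in> S}"
proof
  let ?T = "span {p x y | x y. x \<in> S \<and> y \<in> S}"
  have span_V: "span S \<subseteq> V" using S V by (rule span_minimal)
  have zero_left: "p 0 z = 0" if "z \<in> V" for z
    using scale_left[OF subspace_0[OF V] that, of 0] by simp
  have zero_right: "p z 0 = 0" if "z \<in> V" for z
    using scale_right[OF subspace_0[OF V] that, of 0] by simp
  have basis_span: "p u y \<in> ?T" if "u \<in> S" "y \<in> span S" for u y
  proof -
    have "span S \<subseteq> {y \<in> V. p u y \<in> ?T}"
    proof (rule span_minimal)
      show "S \<subseteq> {y \<in> V. p u y \<in> ?T}"
        using S \<open>u \<in> S\<close> by (auto intro: span_base)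
      show "subspace {y \<in> V. p u y \<in> ?T}"
        using V S \<open>u \<in> S\<close> by (auto simp: subspace_def zero_right add_right scale_right
            span_zero span_add span_scale)
    qed
    then show ?thesis using \<open>y \<in> span S\<close> by blast
  qed
  have span_span: "p x y \<in> ?T" if "x \<in> span S" "y \<in> span S" for x y
  proof -
    have "span S \<subseteq> {x \<in> V. p x y \<in> ?T}"
    proof (rule span_minimal)
      show "S \<subseteq> {x \<in> V. p x y \<in> ?T}"
        using S \<open>y \<in> span S\<close> basis_span by auto
      show "subspace {x \<in> V. p x y \<in> ?T}"
        using V span_V \<open>y \<in> span S\<close> by (auto simp: subspace_def zero_left add_left scale_left
            span_zero span_add span_scale)
    qed
    then show ?thesis using \<open>x \<in> span S\<close> by blast
  qed
  show "span {p x y | x y. x \<in> span S \<and> y \<in> span S} \<subseteq> ?T"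
    by (rule span_minimal) (use span_span in auto)
  show "?T \<subseteq> span {p x y | x y. x \<in> span S \<and> y \<in> span S}"
    by (rule span_mono) (use span_superset in blast)
qed

end

interpretation fun_vs: module "fscale :: 'k::field \<Rightarrow> ('a \<Rightarrow> 'k) \<Rightarrow> ('a \<Rightarrow> 'k)"
  by standard (auto simp: fscale_def fun_eq_iff algebra_simps)

lemma sum_fun_apply: "(\<Sum>i\<in>A. F i) c = (\<Sum>i\<in>A. F i c)"
  by (induction A rule: infinite_finite_induct) auto

lemma supp_fn_add: "supp_fn ((x::'a \<Rightarrow> 'k::field) + y) \<subseteq> supp_fn x \<union> supp_fn y"
  by (auto simp: supp_fn_def)

lemma supp_fn_fscale: "supp_fn (fscale c x) \<subseteq> supp_fn x"
  by (auto simp: supp_fn_def fscale_def)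

lemma subspace_alg_carrier: "fun_vs.subspace (alg_carrier G :: ('a \<Rightarrow> 'k::field) set)"
proof (rule fun_vs.subspaceI)
  show "(0::'a \<Rightarrow> 'k) \<in> alg_carrier G"
    by (simp add: alg_carrier_def supp_fn_def)
  show "x + y \<in> alg_carrier G" if "x \<in> alg_carrier G" "y \<in> alg_carrier G" for x y :: "'a \<Rightarrow> 'k"
    using that supp_fn_add[of x y] by (auto simp: alg_carrier_def intro: finite_subset)
  show "fscale c x \<in> alg_carrier G" if "x \<in> alg_carrier G" for c and x :: "'a \<Rightarrow> 'k"
    using that supp_fn_fscale[of c x] by (auto simp: alg_carrier_def intro: finite_subset)
qed

text \<open>The double sum defining the product may be taken over any finite supersets of the
  supports; this lets sums of vectors with different supports be compared.\<close>
lemma alg_mult_over_supersets: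
  assumes "finite S" "supp_fn x \<subseteq> S" "finite T" "supp_fn y \<subseteq> T"
  shows "alg_mult G f t x y = (\<lambda>c. \<Sum>a\<in>S. \<Sum>b\<in>T.
      if a \<otimes>\<^bsub>G\<^esub> b \<otimes>\<^bsub>G\<^esub> t = c then f a b * x a * y b else 0)"
proof (rule ext)
  fix c
  have inner: "(\<Sum>b\<in>supp_fn y. if a \<otimes>\<^bsub>G\<^esub> b \<otimes>\<^bsub>G\<^esub> t = c then f a b * x a * y b else 0)
      = (\<Sum>b\<in>T. if a \<otimes>\<^bsub>G\<^esub> b \<otimes>\<^bsub>G\<^esub> t = c then f a b * x a * y b else 0)" for a
    by (rule sum.mono_neutral_left) (use assms in \<open>auto simp: supp_fn_def\<close>)
  show "alg_mult G f t x y c = (\<Sum>a\<in>S. \<Sum>b\<in>T.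
      if a \<otimes>\<^bsub>G\<^esub> b \<otimes>\<^bsub>G\<^esub> t = c then f a b * x a * y b else 0)"
    unfolding alg_mult_def inner
    by (rule sum.mono_neutral_left)
       (use assms in \<open>auto simp: supp_fn_def intro!: sum.neutral split: if_splits\<close>)
qed

lemma finite_supp_fn: "x \<in> alg_carrier G \<Longrightarrow> finite (supp_fn x)"
  by (simp add: alg_carrier_def)

lemma alg_mult_add_left:
  assumes "x \<in> alg_carrier G" "y \<in> alg_carrier G" "z \<in> alg_carrier G"
  shows "alg_mult G f t (x + y) z = alg_mult G f t x z + alg_mult G f t y z"
proof -
  have S: "finite (supp_fn x \<union> supp_fn y)" and T: "finite (supp_fn z)"
    using assms by (auto simp: finite_supp_fn)
  show ?thesis
    unfolding alg_mult_over_supersets[OF S supp_fn_add T order_refl]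
      alg_mult_over_supersets[OF S Un_upper1 T order_refl]
      alg_mult_over_supersets[OF S Un_upper2 T order_refl]
    by (auto simp: fun_eq_iff sum.distrib[symmetric] algebra_simps intro!: sum.cong)
qed

lemma alg_mult_add_right:
  assumes "x \<in> alg_carrier G" "y \<in> alg_carrier G" "z \<in> alg_carrier G"
  shows "alg_mult G f t z (x + y) = alg_mult G f t z x + alg_mult G f t z y"
proof -
  have S: "finite (supp_fn z)" and T: "finite (supp_fn x \<union> supp_fn y)"
    using assms by (auto simp: finite_supp_fn)
  show ?thesis
    unfolding alg_mult_over_supersets[OF S order_refl T supp_fn_add]
      alg_mult_over_supersets[OF S order_refl T Un_upper1]
      alg_mult_over_supersets[OF S order_refl T Un_upper2]
    by (auto simp: fun_eq_iff sum.distrib[symmetric] algebra_simps intro!: sum.cong)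
qed

lemma alg_mult_scale_left:
  assumes "x \<in> alg_carrier G" "z \<in> alg_carrier G"
  shows "alg_mult G f t (fscale c x) z = fscale c (alg_mult G f t x z)"
proof -
  have S: "finite (supp_fn x)" and T: "finite (supp_fn z)"
    using assms by (auto simp: finite_supp_fn)
  show ?thesis
    unfolding alg_mult_over_supersets[OF S supp_fn_fscale T order_refl]
      alg_mult_over_supersets[OF S order_refl T order_refl]
    by (auto simp: fun_eq_iff fscale_def sum_distrib_left algebra_simps intro!: sum.cong)
qed

lemma alg_mult_scale_right:
  assumes "x \<in> alg_carrier G" "z \<in> alg_carrier G"
  shows "alg_mult G f t z (fscale c x) = fscale c (alg_mult G f t z x)"
proof -
  have S: "finite (supp_fn z)" and T: "finite (supp_fn x)"
    using assms by (auto simp: finite_supp_fn)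
  show ?thesis
    unfolding alg_mult_over_supersets[OF S order_refl T supp_fn_fscale]
      alg_mult_over_supersets[OF S order_refl T order_refl]
    by (auto simp: fun_eq_iff fscale_def sum_distrib_left algebra_simps intro!: sum.cong)
qed

lemma span_alg_products:
  assumes "S \<subseteq> alg_carrier G"
  shows "fun_vs.span {alg_mult G f t x y | x y. x \<in> fun_vs.span S \<and> y \<in> fun_vs.span S}
       = fun_vs.span {alg_mult G f t x y | x y. x \<in> S \<and> y \<in> S}"
  by (rule fun_vs.span_products_of_span[OF subspace_alg_carrier assms])
     (simp_all add: alg_mult_add_left alg_mult_add_right alg_mult_scale_left alg_mult_scale_right)

definition basis_vec :: "'a \<Rightarrow> ('a \<Rightarrow> 'k::field)" where
  "basis_vec g = (\<lambda>x. if x = g then 1 else 0)"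

lemma supp_fn_basis_vec: "supp_fn (basis_vec g) = {g}"
  by (auto simp: supp_fn_def basis_vec_def)

lemma basis_vec_in_alg_carrier: "g \<in> carrier G \<Longrightarrow> fscale c (basis_vec g) \<in> alg_carrier G"
  using supp_fn_fscale[of c "basis_vec g"]
  by (auto simp: alg_carrier_def supp_fn_basis_vec intro: finite_subset)

lemma fscale_basis_vec_eq_0: "fscale c (basis_vec g) = 0 \<longleftrightarrow> c = 0"
  by (auto simp: fscale_def basis_vec_def fun_eq_iff)

lemma alg_mult_basis_vec:
  "alg_mult G f t (fscale c (basis_vec g)) (fscale d (basis_vec h))
     = fscale (c * d * f g h) (basis_vec (g \<otimes>\<^bsub>G\<^esub> h \<otimes>\<^bsub>G\<^esub> t))"
proof -
  have "supp_fn (fscale c (basis_vec g)) \<subseteq> {g}" "supp_fn (fscale d (basis_vec h)) \<subseteq> {h}"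
    using supp_fn_fscale supp_fn_basis_vec by metis+
  then show ?thesis
    by (simp add: alg_mult_over_supersets[where S="{g}" and T="{h}"] fun_eq_iff fscale_def basis_vec_def)
qed

lemma alg_carrier_eq_span_basis:
  "(alg_carrier G :: ('a \<Rightarrow> 'k::field) set) = fun_vs.span {basis_vec g | g. g \<in> carrier G}"
proof
  let ?B = "{basis_vec g | g. g \<in> carrier G} :: ('a \<Rightarrow> 'k) set"
  show "fun_vs.span ?B \<subseteq> alg_carrier G"
    by (rule fun_vs.span_minimal[OF _ subspace_alg_carrier])
       (use basis_vec_in_alg_carrier[where c=1] in \<open>auto simp: fscale_def\<close>)
  show "alg_carrier G \<subseteq> fun_vs.span ?B"
  proof
    fix x :: "'a \<Rightarrow> 'k" assume x: "x \<in> alg_carrier G"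
    have "x = (\<Sum>a\<in>supp_fn x. fscale (x a) (basis_vec a))"
    proof (rule ext)
      fix c
      have "(\<Sum>a\<in>supp_fn x. fscale (x a) (basis_vec a)) c = (\<Sum>a\<in>supp_fn x. if a = c then x a else 0)"
        by (simp add: sum_fun_apply fscale_def basis_vec_def eq_commute if_distrib cong: if_cong)
      also have "\<dots> = x c"
        using x by (auto simp: sum.delta' alg_carrier_def supp_fn_def)
      finally show "x c = (\<Sum>a\<in>supp_fn x. fscale (x a) (basis_vec a)) c" by simp
    qed
    also have "\<dots> \<in> fun_vs.span ?B"
      using x by (intro fun_vs.span_sum fun_vs.span_scale fun_vs.span_base)
        (auto simp: alg_carrier_def)
    finally show "x \<in> fun_vs.span ?B" .
  qed
qed

definition shift_seq :: "nat \<Rightarrow> (nat \<Rightarrow> 'a) \<Rightarrow> nat \<Rightarrow> 'a" where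
  "shift_seq n a = (\<lambda>i. a (n + i))"

lemma shift_seq_0 [simp]: "shift_seq 0 a = a"
  by (simp add: shift_seq_def)

lemma shift_seq_shift_seq [simp]: "shift_seq n (shift_seq m a) = shift_seq (m + n) a"
  by (simp add: shift_seq_def add.assoc)

definition mono_index :: "('a, 'm) monoid_scheme \<Rightarrow> 'a \<Rightarrow> nat \<Rightarrow> (nat \<Rightarrow> 'a) \<Rightarrow> 'a" where
  "mono_index G t k a = t [^]\<^bsub>G\<^esub> ((2::nat)^k - 1) \<otimes>\<^bsub>G\<^esub> finprod G a {1..2^k}"

definition pair_factor :: "('a, 'm) monoid_scheme \<Rightarrow> ('a \<Rightarrow> 'a \<Rightarrow> 'k::field) \<Rightarrow> 'a
    \<Rightarrow> nat \<Rightarrow> nat \<Rightarrow> (nat \<Rightarrow> 'a) \<Rightarrow> 'k" where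
  "pair_factor G f t k s a = f (mono_index G t k (shift_seq (2^(k+1)*s) a))
                              (mono_index G t k (shift_seq (2^(k+1)*s + 2^k) a))"

definition mono_coeff :: "('a, 'm) monoid_scheme \<Rightarrow> ('a \<Rightarrow> 'a \<Rightarrow> 'k::field) \<Rightarrow> 'a
    \<Rightarrow> nat \<Rightarrow> (nat \<Rightarrow> 'a) \<Rightarrow> 'k" where
  "mono_coeff G f t m a = (\<Prod>k<m. \<Prod>s<2^(m-k-1). pair_factor G f t k s a)"

lemma prod_cond_iff_mono_coeff: "prod_cond G f t m \<longleftrightarrow>
   (\<forall>a. (\<forall>i\<in>{1..2^m}. a i \<in> carrier G) \<longrightarrow> mono_coeff G f t m a = 0)"
  unfolding prod_cond_def mono_coeff_def pair_factor_def mono_index_def shift_seq_def ..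

lemma prod_lessThan_double: "(\<Prod>s<n+n. F s) = (\<Prod>s<n. F s) * (\<Prod>s<n. F (n + s::nat))"
proof -
  have "(\<Prod>s<n+n. F s) = (\<Prod>s\<in>{0..<n}. F s) * (\<Prod>s\<in>{n..<n+n}. F s)"
    by (simp add: prod.atLeastLessThan_concat lessThan_atLeast0)
  also have "(\<Prod>s\<in>{n..<n+n}. F s) = (\<Prod>s\<in>{0..<n}. F (n + s))"
    using prod.shift_bounds_nat_ivl[of F 0 n n] by (simp add: add.commute)
  finally show ?thesis by (simp add: lessThan_atLeast0)
qed

lemma pair_factor_upper_half:
  assumes "k < m"
  shows "pair_factor G f t k (2^(m-k-1) + s) a = pair_factor G f t k s (shift_seq (2^m) a)"
proof -
  have "k + 1 + (m - k - 1) = m"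
    using assms by simp
  then have "(2::nat)^(k+1) * 2^(m-k-1) = 2^m"
    by (metis power_add)
  then have "(2::nat)^(k+1) * (2^(m-k-1) + s) = 2^m + 2^(k+1) * s"
    by (simp add: distrib_left)
  then show ?thesis
    by (simp add: pair_factor_def add.assoc)
qed

lemma mono_coeff_Suc: "mono_coeff G f t (Suc m) a
   = mono_coeff G f t m a * mono_coeff G f t m (shift_seq (2^m) a)
     * f (mono_index G t m a) (mono_index G t m (shift_seq (2^m) a))"
proof -
  have halves: "(\<Prod>s<2^(m-k). pair_factor G f t k s a)
       = (\<Prod>s<2^(m-k-1). pair_factor G f t k s a)
         * (\<Prod>s<2^(m-k-1). pair_factor G f t k s (shift_seq (2^m) a))" if "k < m" for k
  proof -
    have "m - k = Suc (m - k - 1)"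
      using that by simp
    then have "(2::nat)^(m-k) = 2^(m-k-1) + 2^(m-k-1)"
      by simp
    then show ?thesis
      by (simp only: prod_lessThan_double pair_factor_upper_half[OF that])
  qed
  have "mono_coeff G f t (Suc m) a
      = (\<Prod>k<m. \<Prod>s<2^(m-k). pair_factor G f t k s a) * pair_factor G f t m 0 a"
    by (simp add: mono_coeff_def)
  also have "(\<Prod>k<m. \<Prod>s<2^(m-k). pair_factor G f t k s a)
      = mono_coeff G f t m a * mono_coeff G f t m (shift_seq (2^m) a)"
    by (simp add: mono_coeff_def halves prod.distrib)
  finally show ?thesis
    by (simp add: pair_factor_def)
qed

context comm_monoid
begin

lemma mono_index_closed:
  assumes "t \<in> carrier G" "\<forall>i\<in>{1..2^k}. a i \<in> carrier G"
  shows "mono_index G t k a \<in> carrier G"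
  using assms unfolding mono_index_def by auto

lemma mono_index_cong:
  assumes "\<forall>i\<in>{1..2^k}. a i = b i" "\<forall>i\<in>{1..2^k}. b i \<in> carrier G"
  shows "mono_index G t k a = mono_index G t k b"
  using assms finprod_cong'[of "{1..2^k}" "{1..2^k}" b a] by (simp add: mono_index_def)

lemma mono_index_0: "a 1 \<in> carrier G \<Longrightarrow> mono_index G t 0 a = a 1"
  by (simp add: mono_index_def)

lemma mono_index_Suc:
  assumes t: "t \<in> carrier G" and a: "\<forall>i\<in>{1..2^Suc k}. a i \<in> carrier G"
  shows "mono_index G t (Suc k) a = mono_index G t k a \<otimes> mono_index G t k (shift_seq (2^k) a) \<otimes> t"
proof -
  let ?n = "(2::nat)^k"
  have a1: "a \<in> {1..?n} \<rightarrow> carrier G" and a2: "a \<in> (\<lambda>i. ?n + i) ` {1..?n} \<rightarrow> carrier G"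
    using a by auto
  have "{1..2^Suc k} = {1..?n} \<union> (\<lambda>i. ?n + i) ` {1..?n}"
    by (auto simp: image_iff intro!: bexI[where x="x - 2^k" for x])
  then have "finprod G a {1..2^Suc k} = finprod G a {1..?n} \<otimes> finprod G a ((\<lambda>i. ?n + i) ` {1..?n})"
    using finprod_Un_disjoint[OF _ _ _ a1 a2] by auto
  also have "finprod G a ((\<lambda>i. ?n + i) ` {1..?n}) = finprod G (shift_seq ?n a) {1..?n}"
    unfolding shift_seq_def by (rule finprod_reindex[OF a2]) auto
  finally have prod_split: "finprod G a {1..2^Suc k}
      = finprod G a {1..?n} \<otimes> finprod G (shift_seq ?n a) {1..?n}" .
  have "?n \<ge> 1"
    by simp
  then have exponent: "(2::nat)^Suc k - 1 = (?n - 1) + (?n - 1) + 1"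
    unfolding power_Suc by linarith
  have pow_split: "t [^] ((2::nat)^Suc k - 1) = t [^] (?n - 1) \<otimes> t [^] (?n - 1) \<otimes> t"
    unfolding exponent Suc_eq_plus1[symmetric] nat_pow_Suc nat_pow_mult[OF t] ..
  have "finprod G a {1..?n} \<in> carrier G" "finprod G (shift_seq ?n a) {1..?n} \<in> carrier G"
    unfolding shift_seq_def using a1 a2 by (auto intro!: finprod_closed)
  then show ?thesis
    unfolding mono_index_def prod_split pow_split using t by (simp add: m_ac)
qed

lemma mono_coeff_cong:
  assumes "\<forall>i\<in>{1..2^k}. a i = b i" "\<forall>i\<in>{1..2^k}. b i \<in> carrier G"
  shows "mono_coeff G f t k a = mono_coeff G f t k b"
  using assms
proof (induction k arbitrary: a b)
  case 0
  then show ?case by (simp add: mono_coeff_def)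
next
  case (Suc k)
  have first: "\<forall>i\<in>{1..2^k}. a i = b i" "\<forall>i\<in>{1..2^k}. b i \<in> carrier G"
    using Suc.prems by auto
  have second: "\<forall>i\<in>{1..2^k}. shift_seq (2^k) a i = shift_seq (2^k) b i"
      "\<forall>i\<in>{1..2^k}. shift_seq (2^k) b i \<in> carrier G"
    using Suc.prems by (auto simp: shift_seq_def)
  show ?case
    by (simp add: mono_coeff_Suc Suc.IH[OF first] Suc.IH[OF second]
        mono_index_cong[OF first] mono_index_cong[OF second])
qed

end

definition monomial :: "('a, 'm) monoid_scheme \<Rightarrow> ('a \<Rightarrow> 'a \<Rightarrow> 'k::field) \<Rightarrow> 'a
    \<Rightarrow> nat \<Rightarrow> (nat \<Rightarrow> 'a) \<Rightarrow> ('a \<Rightarrow> 'k)" where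
  "monomial G f t k a = fscale (mono_coeff G f t k a) (basis_vec (mono_index G t k a))"

definition level_monomials :: "('a, 'm) monoid_scheme \<Rightarrow> ('a \<Rightarrow> 'a \<Rightarrow> 'k::field) \<Rightarrow> 'a
    \<Rightarrow> nat \<Rightarrow> ('a \<Rightarrow> 'k) set" where
  "level_monomials G f t k = {monomial G f t k a | a. \<forall>i\<in>{1..2^k}. a i \<in> carrier G}"

context comm_monoid
begin

lemma level_monomials_subset:
  assumes t: "t \<in> carrier G"
  shows "level_monomials G f t k \<subseteq> alg_carrier G"
proof
  fix x assume "x \<in> level_monomials G f t k"
  then obtain a where "x = monomial G f t k a" and "\<forall>i\<in>{1..2^k}. a i \<in> carrier G"
    unfolding level_monomials_def by blast
  then show "x \<in> alg_carrier G"
    using t by (simp add: monomial_def basis_vec_in_alg_carrier mono_index_closed)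
qed

lemma level_monomials_0:
  fixes f :: "'a \<Rightarrow> 'a \<Rightarrow> 'k::field"
  shows "level_monomials G f t 0 = {basis_vec g | g. g \<in> carrier G}"
proof (intro equalityI subsetI)
  fix x assume "x \<in> level_monomials G f t 0"
  then obtain a where "x = monomial G f t 0 a" and "a 1 \<in> carrier G"
    unfolding level_monomials_def by auto
  then show "x \<in> {basis_vec g | g. g \<in> carrier G}"
    by (auto simp: monomial_def mono_coeff_def mono_index_0 fscale_def)
next
  fix x :: "'a \<Rightarrow> 'k" assume "x \<in> {basis_vec g | g. g \<in> carrier G}"
  then obtain g where x: "x = basis_vec g" and g: "g \<in> carrier G"
    by blast
  then have "x = monomial G f t 0 (\<lambda>_. g)"
    by (simp add: monomial_def mono_coeff_def mono_index_0 fscale_def)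
  then show "x \<in> level_monomials G f t 0"
    unfolding level_monomials_def using g by auto
qed

lemma alg_mult_monomial_halves:
  assumes "t \<in> carrier G" "\<forall>i\<in>{1..2^Suc k}. a i \<in> carrier G"
  shows "alg_mult G f t (monomial G f t k a) (monomial G f t k (shift_seq (2^k) a))
       = monomial G f t (Suc k) a"
  using assms by (simp add: monomial_def alg_mult_basis_vec mono_coeff_Suc mono_index_Suc)

text \<open>Two level-k monomials are the halves of a level-(k+1) monomial: concatenate the
  sequences.\<close>
lemma monomials_are_halves:
  assumes a: "\<forall>i\<in>{1..2^k}. a i \<in> carrier G" and b: "\<forall>i\<in>{1..2^k}. b i \<in> carrier G"
  obtains c where "\<forall>i\<in>{1..2^Suc k}. c i \<in> carrier G"
    "monomial G f t k c = monomial G f t k a" "monomial G f t k (shift_seq (2^k) c) = monomial G f t k b"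
proof
  define c where "c = (\<lambda>i. if i \<le> 2^k then a i else b (i - 2^k))"
  show "\<forall>i\<in>{1..2^Suc k}. c i \<in> carrier G"
  proof
    fix i :: nat assume i: "i \<in> {1..2^Suc k}"
    show "c i \<in> carrier G"
    proof (cases "i \<le> 2^k")
      case True
      then show ?thesis using a i by (simp add: c_def)
    next
      case False
      then have "i - 2^k \<in> {1..2^k}" using i by auto
      then show ?thesis using b False by (simp add: c_def)
    qed
  qed
  have ca: "\<forall>i\<in>{1..2^k}. c i = a i" and cb: "\<forall>i\<in>{1..2^k}. shift_seq (2^k) c i = b i"
    by (auto simp: c_def shift_seq_def)
  show "monomial G f t k c = monomial G f t k a"
      "monomial G f t k (shift_seq (2^k) c) = monomial G f t k b"
    unfolding monomial_def mono_coeff_cong[OF ca a] mono_coeff_cong[OF cb b]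
      mono_index_cong[OF ca a] mono_index_cong[OF cb b] by (rule refl)+
qed

lemma products_of_level_monomials:
  assumes t: "t \<in> carrier G"
  shows "{alg_mult G f t x y | x y. x \<in> level_monomials G f t k \<and> y \<in> level_monomials G f t k}
       = level_monomials G f t (Suc k)"
proof (intro equalityI subsetI)
  fix z assume "z \<in> {alg_mult G f t x y | x y. x \<in> level_monomials G f t k \<and> y \<in> level_monomials G f t k}"
  then obtain a b where z: "z = alg_mult G f t (monomial G f t k a) (monomial G f t k b)"
      and a: "\<forall>i\<in>{1..2^k}. a i \<in> carrier G" and b: "\<forall>i\<in>{1..2^k}. b i \<in> carrier G"
    unfolding level_monomials_def by blast
  obtain c where c: "\<forall>i\<in>{1..2^Suc k}. c i \<in> carrier G"
    and halves: "monomial G f t k c = monomial G f t k a"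
      "monomial G f t k (shift_seq (2^k) c) = monomial G f t k b"
    using monomials_are_halves[OF a b] .
  have "z = monomial G f t (Suc k) c"
    unfolding z halves[symmetric] by (rule alg_mult_monomial_halves[OF t c])
  then show "z \<in> level_monomials G f t (Suc k)"
    using c unfolding level_monomials_def by blast
next
  fix z assume "z \<in> level_monomials G f t (Suc k)"
  then obtain c where z: "z = monomial G f t (Suc k) c"
      and c: "\<forall>i\<in>{1..2^Suc k}. c i \<in> carrier G"
    unfolding level_monomials_def by blast
  have "monomial G f t k c \<in> level_monomials G f t k"
      "monomial G f t k (shift_seq (2^k) c) \<in> level_monomials G f t k"
    using c unfolding level_monomials_def by (auto simp: shift_seq_def)
  moreover have "z = alg_mult G f t (monomial G f t k c) (monomial G f t k (shift_seq (2^k) c))"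
    using alg_mult_monomial_halves[OF t c, where f=f] z by simp
  ultimately show "z \<in> {alg_mult G f t x y | x y. x \<in> level_monomials G f t k \<and> y \<in> level_monomials G f t k}"
    by blast
qed

lemma derived_eq_span_level_monomials:
  assumes t: "t \<in> carrier G"
  shows "derived G f t k = fun_vs.span (level_monomials G f t k)"
proof (induction k)
  case 0
  show ?case by (simp add: level_monomials_0 alg_carrier_eq_span_basis)
next
  case (Suc k)
  show ?case
    by (simp add: Suc.IH span_alg_products[OF level_monomials_subset[OF t]]
        products_of_level_monomials[OF t])
qed

lemma derived_eq_zero_iff_prod_cond:
  assumes t: "t \<in> carrier G"
  shows "derived G f t m = {0} \<longleftrightarrow> prod_cond G f t m"
proof -
  have "derived G f t m = {0} \<longleftrightarrow> level_monomials G f t m \<subseteq> {0}"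
    by (simp add: derived_eq_span_level_monomials[OF t] fun_vs.span_eq_zero_iff)
  also have "\<dots> \<longleftrightarrow> (\<forall>a. (\<forall>i\<in>{1..2^m}. a i \<in> carrier G) \<longrightarrow> monomial G f t m a = 0)"
    unfolding level_monomials_def by blast
  also have "\<dots> \<longleftrightarrow> prod_cond G f t m"
    by (simp add: monomial_def fscale_basis_vec_eq_0 prod_cond_iff_mono_coeff)
  finally show ?thesis .
qed

end

theorem proposition3p2:
  fixes G :: "('a, 'm) monoid_scheme" and f :: "'a \<Rightarrow> 'a \<Rightarrow> 'k::field" and t :: 'a
  assumes "comm_group G" and "t \<in> carrier G"
  shows "(\<forall>m. derived G f t m = {0} \<longleftrightarrow> prod_cond G f t m)
    \<and> (alg_solvable G f t \<longleftrightarrow> (\<exists>m. prod_cond G f t m))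
    \<and> (alg_solvable G f t \<longrightarrow> solv_index G f t = (LEAST m. prod_cond G f t m))"
proof -
  interpret comm_monoid G
    using assms(1) by (rule comm_group.axioms)
  have "\<And>m. derived G f t m = {0} \<longleftrightarrow> prod_cond G f t m"
    using assms(2) by (rule derived_eq_zero_iff_prod_cond)
  then show ?thesis
    unfolding alg_solvable_def solv_index_def by simp
qed

end
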